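(* Let $m$ be a positive integer, let $\gamma=(f,g,h)\in C^m(\mathbb{R},\mathbb{R}^3)$ be a horizontal curve, and let $K\subseteq\mathbb{R}$ be compact. Then (1) the $m$th divided differences of $\gamma$ converge uniformly on $K$, and (2) $\gamma$ (restricted to $K$) satisfies the discrete $A/V$ condition on $K$.
   Context: A curve $\gamma=(f,g,h)$ with $f,g,h$ absolutely continuous is horizontal if $h'=2(f'g-fg')$ a.e. $C^m(\mathbb{R},\mathbb{R}^3)$: curves whose components are $m$-times continuously differentiable with bounded $m$th derivative. Divided differences: $\phi[x_0]=\phi(x_0)$, $\phi[x_0,\dots,x_k]=(\phi[x_1,\dots,x_k]-\phi[x_0,\dots,x_{k-1}])/(x_k-x_0)$ for distinct points. The $m$th divided differences of $\phi$ converge uniformly on $K$ if for every $\varepsilon>0$ there is $\delta>0$ with $|\phi[X]-\phi[Y]|<\varepsilon$ whenever $X,Y$ are sets of $m+1$ distinct points of $K$ with $\operatorname{diam}(X\cup Y)<\delta$; for $\gamma$ this is required of each component. For $X$ of $m+1$ distinct points, $P(X;\phi)$ is the unique polynomial of degree $\le m$ agreeing with $\phi$ on $X$ (Newton interpolation polynomial). For $\gamma=(f,g,h):E\to\mathbb{R}^3$, $X\subseteq E$, $\#X=m+1$, $P_f=P(X;f)$, $P_g=P(X;g)$, $a,b\in X$: $A[X,\gamma;a,b]=h(b)-h(a)-2\int_a^b(P_f'P_g-P_g'P_f)$, $V[X,\gamma;a,b]=\operatorname{diam}(X)^{2m}+\operatorname{diam}(X)^m\int_a^b(|P_f'|+|P_g'|)$.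 $\gamma$ satisfies the discrete $A/V$ condition on $E$ if for every $\varepsilon>0$ there is $\delta>0$ such that $|A[X,\gamma;a,b]/V[X,\gamma;a,b]|<\varepsilon$ for all $X\subseteq E$ with $\#X=m+1$, $\operatorname{diam}X<\delta$, and $a,b\in X$ with $a<b$. *)

theory Defs
  imports "HOL-Analysis.Analysis" "HOL-Computational_Algebra.Polynomial"
begin

fun divdiff_list :: "(real \<Rightarrow> real) \<Rightarrow> real list \<Rightarrow> real" where
  "divdiff_list \<phi> [] = 0"
| "divdiff_list \<phi> [x] = \<phi> x"
| "divdiff_list \<phi> (x # y # zs) =
     (divdiff_list \<phi> (y # zs) - divdiff_list \<phi> (x # butlast (y # zs)))
       / (last (y # zs) - x)"

text \<open>Divided difference of phi on a finite set X of distinct points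
  (points listed in increasing order; divided differences are symmetric).\<close>
definition divdiff :: "(real \<Rightarrow> real) \<Rightarrow> real set \<Rightarrow> real" where
  "divdiff \<phi> X = divdiff_list \<phi> (sorted_list_of_set X)"

definition Cm :: "nat \<Rightarrow> (real \<Rightarrow> real) \<Rightarrow> bool" where
  "Cm m \<phi> \<longleftrightarrow> (\<forall>k<m. \<forall>t. (deriv ^^ k) \<phi> differentiable (at t))
      \<and> continuous_on UNIV ((deriv ^^ m) \<phi>)
      \<and> bounded (range ((deriv ^^ m) \<phi>))"

definition abs_continuous_on :: "real set \<Rightarrow> (real \<Rightarrow> real) \<Rightarrow> bool" where
  "abs_continuous_on S \<phi> \<longleftrightarrow>
    (\<forall>\<epsilon>>0. \<exists>\<delta>>0. \<forall>(n::nat) (a::nat \<Rightarrow> real) b.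
       (\<forall>i<n. a i \<le> b i \<and> {a i..b i} \<subseteq> S)
       \<and> (\<forall>i<n. \<forall>j<n. i \<noteq> j \<longrightarrow> b i \<le> a j \<or> b j \<le> a i)
       \<and> (\<Sum>i<n. b i - a i) < \<delta>
       \<longrightarrow> (\<Sum>i<n. \<bar>\<phi> (b i) - \<phi> (a i)\<bar>) < \<epsilon>)"

definition abs_continuous :: "(real \<Rightarrow> real) \<Rightarrow> bool" where
  "abs_continuous \<phi> \<longleftrightarrow> (\<forall>a b. abs_continuous_on {a..b} \<phi>)"

definition horizontal :: "(real \<Rightarrow> real) \<Rightarrow> (real \<Rightarrow> real) \<Rightarrow> (real \<Rightarrow> real) \<Rightarrow> bool" where
  "horizontal f g h \<longleftrightarrow> abs_continuous f \<and> abs_continuous g \<and> abs_continuous h \<and>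
     (AE t in lborel. f differentiable (at t) \<and> g differentiable (at t) \<and>
        (h has_real_derivative 2 * (deriv f t * g t - f t * deriv g t)) (at t))"

definition divdiff_unif_conv :: "nat \<Rightarrow> (real \<Rightarrow> real) \<Rightarrow> real set \<Rightarrow> bool" where
  "divdiff_unif_conv m \<phi> K \<longleftrightarrow>
    (\<forall>\<epsilon>>0. \<exists>\<delta>>0. \<forall>X Y. X \<subseteq> K \<and> Y \<subseteq> K \<and> finite X \<and> finite Y
        \<and> card X = m + 1 \<and> card Y = m + 1 \<and> diameter (X \<union> Y) < \<delta>
        \<longrightarrow> \<bar>divdiff \<phi> X - divdiff \<phi> Y\<bar> < \<epsilon>)"

definition interp_poly :: "real set \<Rightarrow> (real \<Rightarrow> real) \<Rightarrow> real poly" where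
  "interp_poly X \<phi> = (THE p. degree p < card X \<and> (\<forall>x\<in>X. poly p x = \<phi> x))"

definition AVA :: "real set \<Rightarrow> (real \<Rightarrow> real) \<Rightarrow> (real \<Rightarrow> real) \<Rightarrow> (real \<Rightarrow> real)
    \<Rightarrow> real \<Rightarrow> real \<Rightarrow> real" where
  "AVA X f g h a b = h b - h a - 2 * integral {a..b}
     (\<lambda>t. poly (pderiv (interp_poly X f)) t * poly (interp_poly X g) t
        - poly (pderiv (interp_poly X g)) t * poly (interp_poly X f) t)"

definition AVV :: "nat \<Rightarrow> real set \<Rightarrow> (real \<Rightarrow> real) \<Rightarrow> (real \<Rightarrow> real)
    \<Rightarrow> real \<Rightarrow> real \<Rightarrow> real" where
  "AVV m X f g a b = diameter X ^ (2 * m) + diameter X ^ m * integral {a..b}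
     (\<lambda>t. \<bar>poly (pderiv (interp_poly X f)) t\<bar> + \<bar>poly (pderiv (interp_poly X g)) t\<bar>)"

definition discrete_AV :: "nat \<Rightarrow> (real \<Rightarrow> real) \<Rightarrow> (real \<Rightarrow> real) \<Rightarrow> (real \<Rightarrow> real)
    \<Rightarrow> real set \<Rightarrow> bool" where
  "discrete_AV m f g h E \<longleftrightarrow>
    (\<forall>\<epsilon>>0. \<exists>\<delta>>0. \<forall>X a b. X \<subseteq> E \<and> finite X \<and> card X = m + 1 \<and> diameter X < \<delta>
        \<and> a \<in> X \<and> b \<in> X \<and> a < b
        \<longrightarrow> \<bar>AVA X f g h a b / AVV m X f g a b\<bar> < \<epsilon>)"

end

theory Submission
  imports Defs
begin

text \<open>
  By Neville's recurrence the divided difference \<phi>[X] is the leading coefficient of the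
  interpolation polynomial P of \<phi> on X, and Rolle's theorem applied m times to \<phi> - P gives
  a point \<xi> between the nodes with \<phi>^(m)(\<xi>) = m! \<phi>[X]. Uniform continuity of \<phi>^(m) on a
  compact interval then gives (1).

  For (2), comparing P with the interpolant on X with one node replaced by t bounds
  u = f - P_f and v = g - P_g by \<omega> diam(X)^m, and v' = g' - P_g' by \<omega> diam(X)^(m-1), where
  \<omega> is the oscillation of the m-th derivatives on the hull of X. Horizontality holds
  everywhere because both sides of h' = 2 (f' g - f g') are continuous. Since u and v vanish
  at a, b \<in> X, integrating by parts gives A = 4 \<integral> (P_f' v - u P_g' - u v'), hence |A| \<le> 4 \<omega> V.
\<close>

definition differentiable_upto :: "nat \<Rightarrow> (real \<Rightarrow> real) \<Rightarrow> bool" where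
  "differentiable_upto k \<phi> \<longleftrightarrow> (\<forall>i<k. \<forall>t. (deriv ^^ i) \<phi> differentiable (at t))"

lemma funpow_deriv_Suc: "(deriv ^^ Suc i) \<phi> = (deriv ^^ i) (deriv \<phi>)"
  by (simp only: funpow_Suc_right o_def)

lemma differentiable_upto_deriv:
  "differentiable_upto (Suc k) \<phi> \<Longrightarrow> differentiable_upto k (deriv \<phi>)"
  unfolding differentiable_upto_def by (metis Suc_mono funpow_deriv_Suc)

lemma differentiable_upto_DERIV:
  "differentiable_upto (Suc k) \<phi> \<Longrightarrow> (\<phi> has_real_derivative deriv \<phi> t) (at t)"
  unfolding differentiable_upto_def
  by (metis DERIV_deriv_iff_real_differentiable funpow_0 zero_less_Suc)

lemma differentiable_upto_imp_differentiable:
  "differentiable_upto (Suc k) \<phi> \<Longrightarrow> \<phi> differentiable (at t)"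
  using differentiable_upto_DERIV real_differentiable_def by blast

lemma funpow_deriv_minus_poly:
  assumes "differentiable_upto k \<phi>" "j \<le> k"
  shows "(deriv ^^ j) (\<lambda>x. \<phi> x - poly p x) = (\<lambda>x. (deriv ^^ j) \<phi> x - poly ((pderiv ^^ j) p) x)"
  using assms(2)
proof (induction j)
  case 0
  then show ?case by simp
next
  case (Suc j)
  have "((\<lambda>x. (deriv ^^ j) \<phi> x - poly ((pderiv ^^ j) p) x) has_real_derivative
      deriv ((deriv ^^ j) \<phi>) x - poly (pderiv ((pderiv ^^ j) p)) x) (at x)" for x
    using assms(1) Suc.prems unfolding differentiable_upto_def
    by (auto intro!: DERIV_diff poly_DERIV simp: DERIV_deriv_iff_real_differentiable)
  then have "deriv (\<lambda>x. (deriv ^^ j) \<phi> x - poly ((pderiv ^^ j) p) x) =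
      (\<lambda>x. deriv ((deriv ^^ j) \<phi>) x - poly (pderiv ((pderiv ^^ j) p)) x)"
    by (intro ext DERIV_imp_deriv)
  then show ?case
    using Suc by simp
qed

lemma differentiable_upto_minus_poly:
  assumes "differentiable_upto k \<phi>"
  shows "differentiable_upto k (\<lambda>x. \<phi> x - poly p x)"
  unfolding differentiable_upto_def
proof (intro allI impI)
  fix j t assume "j < k"
  then show "(deriv ^^ j) (\<lambda>x. \<phi> x - poly p x) differentiable (at t)"
    using assms funpow_deriv_minus_poly[OF assms, of j p] unfolding differentiable_upto_def
    by (auto intro!: derivative_intros)
qed

lemma funpow_pderiv_degree_le:
  fixes p :: "'a::{comm_semiring_1,semiring_no_zero_divisors,semiring_char_0} poly"
  assumes "degree p \<le> j"
  shows "(pderiv ^^ j) p = [:fact j * coeff p j:]"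
  using assms
proof (induction j arbitrary: p)
  case 0
  then show ?case by (auto elim!: degree_eq_zeroE)
next
  case (Suc j)
  have "(pderiv ^^ j) (pderiv p) = [:fact j * coeff (pderiv p) j:]"
    using Suc by (simp add: degree_pderiv)
  then show ?case by (simp add: funpow_Suc_right coeff_pderiv mult_ac del: funpow.simps)
qed

lemma Cm_imp_differentiable_upto: "Cm m \<phi> \<Longrightarrow> differentiable_upto m \<phi>"
  unfolding Cm_def differentiable_upto_def by blast

lemma Cm_continuous_deriv:
  assumes "Cm m \<phi>" "i \<le> m"
  shows "continuous_on UNIV ((deriv ^^ i) \<phi>)"
proof (cases "i = m")
  case False
  then have "\<forall>t. (deriv ^^ i) \<phi> differentiable (at t)" using assms unfolding Cm_def by auto
  then show ?thesis by (meson continuous_at_imp_continuous_on differentiable_imp_continuous_within)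
qed (use assms in \<open>auto simp: Cm_def\<close>)

lemma divdiff_list_interpolant:
  fixes \<phi> :: "real \<Rightarrow> real"
  assumes "distinct xs" "length xs = Suc k"
  shows "\<exists>p. degree p \<le> k \<and> (\<forall>x\<in>set xs. poly p x = \<phi> x) \<and> coeff p k = divdiff_list \<phi> xs"
  using assms
proof (induction k arbitrary: xs)
  case 0
  then obtain x where "xs = [x]" by (cases xs) auto
  then show ?case by (intro exI[of _ "[:\<phi> x:]"]) simp
next
  case (Suc k)
  then obtain x y zs where xs: "xs = x # y # zs"
    by (cases xs; cases "tl xs") auto
  define l where "l = last (y # zs)"
  define ys where "ys = x # butlast (y # zs)"
  have split: "y # zs = butlast (y # zs) @ [l]" unfolding l_def by simp
  have set_xs: "set xs = insert l (set ys)" unfolding xs ys_def by (subst split) auto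
  have "distinct (y # zs)" "length (y # zs) = Suc k" "distinct ys" "length ys = Suc k"
    using Suc.prems unfolding xs ys_def by (auto dest: in_set_butlastD simp: distinct_butlast)
  then obtain p1 p0 where
      p1: "degree p1 \<le> k" "\<forall>w\<in>set (y # zs). poly p1 w = \<phi> w" "coeff p1 k = divdiff_list \<phi> (y # zs)"
    and
      p0: "degree p0 \<le> k" "\<forall>w\<in>set ys. poly p0 w = \<phi> w" "coeff p0 k = divdiff_list \<phi> ys"
    using Suc.IH by meson
  have l_ne_x: "l \<noteq> x" using Suc.prems split unfolding xs by (metis distinct.simps(2) in_set_conv_decomp)
  \<comment> \<open>Neville's recurrence\<close>
  define p where "p = smult (1 / (l - x)) ([:-x, 1:] * p1 - [:-l, 1:] * p0)"
  have "degree ([:-x, 1:] * p1) \<le> Suc k"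
    using p1(1) by (intro order.trans[OF degree_mult_le]) simp
  moreover have "degree ([:-l, 1:] * p0) \<le> Suc k"
    using p0(1) by (intro order.trans[OF degree_mult_le]) simp
  ultimately have "degree p \<le> Suc k"
    unfolding p_def by (metis degree_diff_le degree_smult_le order.trans)
  moreover have "coeff p (Suc k) = divdiff_list \<phi> xs"
  proof -
    have high: "coeff p1 (Suc k) = 0" "coeff p0 (Suc k) = 0"
      using p1(1) p0(1) by (simp_all add: coeff_eq_0)
    then have "coeff ([:-x, 1:] * p1) (Suc k) = coeff p1 k" "coeff ([:-l, 1:] * p0) (Suc k) = coeff p0 k"
      by (simp_all add: mult_pCons_left)
    moreover have "divdiff_list \<phi> xs = (divdiff_list \<phi> (y # zs) - divdiff_list \<phi> ys) / (l - x)"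
      unfolding xs ys_def l_def by simp
    ultimately show ?thesis
      using p1(3) p0(3) high by (simp add: p_def diff_divide_distrib)
  qed
  moreover have "poly p w = \<phi> w" if "w \<in> set xs" for w
  proof -
    have p_w: "poly p w = ((w - x) * poly p1 w - (w - l) * poly p0 w) / (l - x)"
      using l_ne_x by (simp add: p_def field_simps)
    have "l \<in> set (y # zs)" "x \<in> set ys" "set ys \<subseteq> insert x (set (y # zs))"
      unfolding l_def ys_def by (auto dest: in_set_butlastD)
    moreover have "w = l \<or> w \<in> set ys" using that set_xs by simp
    ultimately consider "w = l" "poly p1 w = \<phi> w" | "w = x" "poly p0 w = \<phi> w"
      | "poly p1 w = \<phi> w" "poly p0 w = \<phi> w"
      using p0(2) p1(2) by (metis insertE subsetD)
    moreover have "(w - x) * a - (w - l) * a = (l - x) * a" for a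
      by (simp add: algebra_simps)
    ultimately show ?thesis
      using l_ne_x unfolding p_w by cases auto
  qed
  ultimately show ?case by blast
qed

lemma interp_poly_eqI:
  assumes "finite X" "degree p < card X" "\<forall>x\<in>X. poly p x = \<phi> x"
  shows "interp_poly X \<phi> = p"
  unfolding interp_poly_def
  by (rule the_equality) (use assms in \<open>auto intro: poly_eqI_degree[of X]\<close>)

lemma
  assumes "finite X" "card X = Suc k"
  shows interp_poly_degree_le: "degree (interp_poly X \<phi>) \<le> k"
    and poly_interp_poly: "\<forall>x\<in>X. poly (interp_poly X \<phi>) x = \<phi> x"
    and coeff_interp_poly: "coeff (interp_poly X \<phi>) k = divdiff \<phi> X"
proof -
  have "distinct (sorted_list_of_set X)" "length (sorted_list_of_set X) = Suc k"
    using assms by auto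
  then obtain p where p: "degree p \<le> k" "\<forall>x\<in>X. poly p x = \<phi> x" "coeff p k = divdiff \<phi> X"
    using divdiff_list_interpolant assms(1) unfolding divdiff_def by fastforce
  moreover have "interp_poly X \<phi> = p" using p assms by (intro interp_poly_eqI) auto
  ultimately show "degree (interp_poly X \<phi>) \<le> k" "\<forall>x\<in>X. poly (interp_poly X \<phi>) x = \<phi> x"
      "coeff (interp_poly X \<phi>) k = divdiff \<phi> X"
    by auto
qed

lemma Rolle_zeros_deriv:
  fixes \<psi> :: "real \<Rightarrow> real"
  assumes "\<forall>t. \<psi> differentiable (at t)" "finite S" "card S = Suc n" "\<forall>s\<in>S. \<psi> s = 0"
  shows "\<exists>Z. finite Z \<and> card Z = n \<and> Z \<subseteq> {Min S..Max S} \<and> (\<forall>z\<in>Z. deriv \<psi> z = 0)"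
  using assms(2-4)
proof (induction n arbitrary: S)
  case 0
  then show ?case by (intro exI[of _ "{}"]) auto
next
  case (Suc n)
  define M where "M = Max S"
  define S0 where "S0 = S - {M}"
  define M0 where "M0 = Max S0"
  have "S \<noteq> {}" using Suc.prems by auto
  then have "M \<in> S" using Suc.prems(1) by (simp add: M_def)
  then have "finite S0" "card S0 = Suc n" "S0 \<subseteq> S" using Suc.prems by (auto simp: S0_def)
  then have "S0 \<noteq> {}" by auto
  then have M0_in: "M0 \<in> S0" and Min_le: "Min S \<le> Min S0"
    using \<open>finite S0\<close> \<open>S0 \<subseteq> S\<close> Suc.prems(1) by (auto simp: M0_def Min_antimono)
  then have "M0 \<le> M" "M0 \<noteq> M"
    using \<open>S0 \<subseteq> S\<close> Suc.prems(1) unfolding M_def S0_def by auto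
  then have "M0 < M" by simp
  obtain Z0 where Z0: "finite Z0" "card Z0 = n" "Z0 \<subseteq> {Min S0..M0}" "\<forall>z\<in>Z0. deriv \<psi> z = 0"
    using Suc.IH[of S0] \<open>finite S0\<close> \<open>card S0 = Suc n\<close> Suc.prems(3) \<open>S0 \<subseteq> S\<close>
    unfolding M0_def by blast
  have "continuous_on {M0..M} \<psi>"
    using assms(1) by (meson continuous_at_imp_continuous_on differentiable_imp_continuous_within)
  moreover have "\<psi> M0 = \<psi> M"
    using Suc.prems(1,3) M0_in \<open>S0 \<subseteq> S\<close> \<open>S \<noteq> {}\<close> unfolding M_def by auto
  ultimately obtain z where z: "M0 < z" "z < M" "DERIV \<psi> z :> 0"
    using Rolle[OF \<open>M0 < M\<close>] assms(1) by blast
  have "Min S0 \<le> M0" using \<open>finite S0\<close> M0_in by auto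
  moreover have "z \<notin> Z0" using Z0(3) z(1) by auto
  ultimately show ?case
    using Z0 z Min_le \<open>M0 < M\<close> DERIV_imp_deriv[OF z(3)] unfolding M_def
    by (intro exI[of _ "insert z Z0"]) auto
qed

lemma Min_Max_subset_atLeastAtMost:
  fixes S :: "'a::linorder set"
  assumes "finite S" "S \<noteq> {}" "S \<subseteq> {l..u}"
  shows "{Min S..Max S} \<subseteq> {l..u}"
  using assms Min_in[OF assms(1,2)] Max_in[OF assms(1,2)] by auto

lemma higher_Rolle:
  fixes \<psi> :: "real \<Rightarrow> real"
  assumes "differentiable_upto k \<psi>" "finite S" "card S = Suc k" "\<forall>s\<in>S. \<psi> s = 0"
  shows "\<exists>\<xi>\<in>{Min S..Max S}. (deriv ^^ k) \<psi> \<xi> = 0"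
  using assms
proof (induction k arbitrary: \<psi> S)
  case 0
  then obtain s where "S = {s}" by (auto simp: card_Suc_eq)
  then show ?case using 0 by auto
next
  case (Suc k)
  obtain Z where Z: "finite Z" "card Z = Suc k" "Z \<subseteq> {Min S..Max S}" "\<forall>z\<in>Z. deriv \<psi> z = 0"
    using Rolle_zeros_deriv[of \<psi> S "Suc k"] Suc.prems differentiable_upto_imp_differentiable by blast
  obtain \<xi> where "\<xi> \<in> {Min Z..Max Z}" "(deriv ^^ k) (deriv \<psi>) \<xi> = 0"
    using Suc.IH[OF differentiable_upto_deriv[OF Suc.prems(1)] Z(1,2,4)] by blast
  moreover have "{Min Z..Max Z} \<subseteq> {Min S..Max S}"
    using Z by (intro Min_Max_subset_atLeastAtMost) auto
  ultimately show ?case by (auto simp only: funpow_deriv_Suc)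
qed

lemma interpolant_mean_value:
  assumes "differentiable_upto k \<phi>" "finite S" "card S = Suc k"
    and "degree p \<le> k" "\<forall>x\<in>S. poly p x = \<phi> x"
  shows "\<exists>\<xi>\<in>{Min S..Max S}. (deriv ^^ k) \<phi> \<xi> = fact k * coeff p k"
proof -
  obtain \<xi> where "\<xi> \<in> {Min S..Max S}" "(deriv ^^ k) (\<lambda>x. \<phi> x - poly p x) \<xi> = 0"
    using higher_Rolle[OF differentiable_upto_minus_poly[OF assms(1), of p] assms(2,3)] assms(5) by auto
  then show ?thesis
    using funpow_deriv_minus_poly[OF assms(1) order_refl] funpow_pderiv_degree_le[OF assms(4)] by auto
qed

corollary divdiff_mean_value:
  assumes "differentiable_upto k \<phi>" "finite X" "card X = Suc k"
  shows "\<exists>\<xi>\<in>{Min X..Max X}. (deriv ^^ k) \<phi> \<xi> = fact k * divdiff \<phi> X"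
  using interpolant_mean_value[OF assms interp_poly_degree_le poly_interp_poly] coeff_interp_poly assms
  by simp

lemma diff_eq_smult_prod_of_agree:
  fixes p q :: "'a::idom poly"
  assumes "degree p \<le> k" "degree q \<le> k" "finite A" "card A = k" "\<forall>x\<in>A. poly p x = poly q x"
  shows "q - p = smult (coeff q k - coeff p k) (\<Prod>x\<in>A. [:-x, 1:])"
proof (rule poly_eqI_degree_lead_coeff[where n = k and A = A])
  have deg: "degree (\<Prod>x\<in>A. [:-x, 1:]) = k"
    using assms(3,4) by (subst degree_prod_eq_sum_degree) auto
  then show "coeff (q - p) k = coeff (smult (coeff q k - coeff p k) (\<Prod>x\<in>A. [:-x, 1:])) k"
    using lead_coeff_prod[of "\<lambda>x. [:-x, 1:]" A] by simp
  show "degree (smult (coeff q k - coeff p k) (\<Prod>x\<in>A. [:-x, 1:])) \<le> k"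
    using deg degree_smult_le le_trans by blast
  show "degree (q - p) \<le> k" using assms(1,2) by (simp add: degree_diff_le)
  show "poly (q - p) z = poly (smult (coeff q k - coeff p k) (\<Prod>x\<in>A. [:-x, 1:])) z" if "z \<in> A" for z
    using that assms(3,5) by (simp add: poly_prod prod_zero_iff)
qed (use assms in simp)

lemma interpolation_error:
  assumes \<phi>: "differentiable_upto k \<phi>"
    and X: "finite X" "card X = Suc k" "X \<subseteq> {l..u}"
    and p: "degree p \<le> k" "\<forall>x\<in>X. poly p x = \<phi> x"
    and t: "t \<in> {l..u}"
    and osc: "\<And>\<xi> \<eta>. \<xi> \<in> {l..u} \<Longrightarrow> \<eta> \<in> {l..u} \<Longrightarrow>
      \<bar>(deriv ^^ k) \<phi> \<xi> - (deriv ^^ k) \<phi> \<eta>\<bar> \<le> e"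
  shows "\<bar>\<phi> t - poly p t\<bar> \<le> e / fact k * (u - l) ^ k"
proof (cases "t \<in> X")
  case True
  moreover have "0 \<le> e" using osc[OF t t] by simp
  ultimately show ?thesis using p(2) t by simp
next
  case False
  \<comment> \<open>Exchange one node of X for t; the two interpolants differ by a multiple of the
      common node polynomial, and the multiple is controlled by the mean value theorem.\<close>
  obtain x0 where "x0 \<in> X" using X(2) by fastforce
  define A where "A = X - {x0}"
  have A: "finite A" "card A = k" "A \<subseteq> X" using X(1,2) \<open>x0 \<in> X\<close> by (auto simp: A_def)
  have X': "finite (insert t A)" "card (insert t A) = Suc k" "insert t A \<subseteq> {l..u}"
    using A False X(3) t by (auto simp: card_insert_if)
  define q where "q = interp_poly (insert t A) \<phi>"
  have q: "degree q \<le> k" "\<forall>x\<in>insert t A. poly q x = \<phi> x"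
    unfolding q_def using interp_poly_degree_le[OF X'(1,2)] poly_interp_poly[OF X'(1,2)] by auto
  obtain \<xi> \<eta> where "\<xi> \<in> {l..u}" "(deriv ^^ k) \<phi> \<xi> = fact k * coeff q k"
      and "\<eta> \<in> {l..u}" "(deriv ^^ k) \<phi> \<eta> = fact k * coeff p k"
    using interpolant_mean_value[OF \<phi> X'(1,2) q] interpolant_mean_value[OF \<phi> X(1,2) p]
      Min_Max_subset_atLeastAtMost[OF X'(1) _ X'(3)] Min_Max_subset_atLeastAtMost[OF X(1) _ X(3)] X(2)
    by (metis card.empty insert_not_empty nat.distinct(1) subsetD)
  then have "fact k * \<bar>coeff q k - coeff p k\<bar> \<le> e"
    using osc by (metis abs_mult abs_of_nat of_nat_fact right_diff_distrib)
  then have c: "\<bar>coeff q k - coeff p k\<bar> \<le> e / fact k"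
    by (simp add: field_simps)
  have "q - p = smult (coeff q k - coeff p k) (\<Prod>x\<in>A. [:-x, 1:])"
    using A q p by (intro diff_eq_smult_prod_of_agree) auto
  from arg_cong[OF this, of "\<lambda>r. poly r t"]
  have "\<phi> t - poly p t = (coeff q k - coeff p k) * (\<Prod>x\<in>A. t - x)"
    using q(2) by (simp add: poly_prod)
  moreover have prod: "\<bar>\<Prod>x\<in>A. t - x\<bar> \<le> (u - l) ^ k"
  proof -
    have "\<bar>\<Prod>x\<in>A. t - x\<bar> = (\<Prod>x\<in>A. \<bar>t - x\<bar>)" by (simp add: abs_prod)
    also have "\<dots> \<le> (\<Prod>x\<in>A. u - l)"
      using A(3) X(3) t by (intro prod_mono) (auto simp: abs_le_iff subset_iff)
    finally show ?thesis using A(2) by simp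
  qed
  ultimately have "\<bar>\<phi> t - poly p t\<bar> = \<bar>coeff q k - coeff p k\<bar> * \<bar>\<Prod>x\<in>A. t - x\<bar>"
    by (simp add: abs_mult)
  also have "\<dots> \<le> e / fact k * (u - l) ^ k"
    using c prod by (intro mult_mono) auto
  finally show ?thesis .
qed

lemma diameter_finite_real:
  fixes S :: "real set"
  assumes "finite S" "S \<noteq> {}"
  shows "diameter S = Max S - Min S"
proof (rule antisym)
  show "diameter S \<le> Max S - Min S"
    using assms by (intro diameter_le) (auto simp: abs_le_iff intro!: diff_mono)
  show "Max S - Min S \<le> diameter S"
    using diameter_bounded_bound[of S "Max S" "Min S"] assms
    by (simp add: finite_imp_bounded dist_real_def)
qed

lemma interp_poly_error:
  assumes "differentiable_upto m \<phi>" "finite X" "card X = Suc m" "t \<in> {Min X..Max X}"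
    and osc: "\<And>\<xi> \<eta>. \<xi> \<in> {Min X..Max X} \<Longrightarrow> \<eta> \<in> {Min X..Max X} \<Longrightarrow>
      \<bar>(deriv ^^ m) \<phi> \<xi> - (deriv ^^ m) \<phi> \<eta>\<bar> \<le> e"
  shows "\<bar>\<phi> t - poly (interp_poly X \<phi>) t\<bar> \<le> e * diameter X ^ m"
proof -
  have "X \<noteq> {}" "X \<subseteq> {Min X..Max X}" using assms(2,3) by auto
  then have "\<bar>\<phi> t - poly (interp_poly X \<phi>) t\<bar> \<le> e / fact m * diameter X ^ m"
    using interpolation_error[OF assms(1-3) _ interp_poly_degree_le[OF assms(2,3)]
        poly_interp_poly[OF assms(2,3)] assms(4) osc] assms(2)
    by (simp add: diameter_finite_real)
  also have "\<dots> \<le> e * diameter X ^ m"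
    using osc[OF assms(4) assms(4)] diameter_ge_0[OF finite_imp_bounded[OF assms(2)]]
    by (intro mult_right_mono) (auto simp: divide_le_eq mult_le_cancel_left1)
  finally show ?thesis .
qed

lemma deriv_interp_poly_error:
  assumes \<phi>: "differentiable_upto (Suc k) \<phi>" and X: "finite X" "card X = Suc (Suc k)"
    and t: "t \<in> {Min X..Max X}"
    and osc: "\<And>\<xi> \<eta>. \<xi> \<in> {Min X..Max X} \<Longrightarrow> \<eta> \<in> {Min X..Max X} \<Longrightarrow>
      \<bar>(deriv ^^ Suc k) \<phi> \<xi> - (deriv ^^ Suc k) \<phi> \<eta>\<bar> \<le> e"
  shows "\<bar>deriv \<phi> t - poly (pderiv (interp_poly X \<phi>)) t\<bar> \<le> e * diameter X ^ k"
proof -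
  define P where "P = interp_poly X \<phi>"
  have v: "((\<lambda>x. \<phi> x - poly P x) has_real_derivative deriv \<phi> x - poly (pderiv P) x) (at x)" for x
    by (intro DERIV_diff differentiable_upto_DERIV[OF \<phi>] poly_DERIV)
  have "\<forall>t. (\<lambda>x. \<phi> x - poly P x) differentiable (at t)"
    using v real_differentiable_def by blast
  moreover have "\<forall>s\<in>X. \<phi> s - poly P s = 0"
    using poly_interp_poly[OF X] unfolding P_def by simp
  \<comment> \<open>pderiv P interpolates deriv \<phi> at the k + 1 Rolle points of \<phi> - P\<close>
  ultimately obtain Z where Z: "finite Z" "card Z = Suc k" "Z \<subseteq> {Min X..Max X}"
      "\<forall>z\<in>Z. deriv (\<lambda>x. \<phi> x - poly P x) z = 0"
    using Rolle_zeros_deriv[OF _ X] by blast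
  have "\<forall>z\<in>Z. poly (pderiv P) z = deriv \<phi> z"
    using Z(4) DERIV_imp_deriv[OF v] by auto
  moreover have "degree (pderiv P) \<le> k"
    using interp_poly_degree_le[OF X, of \<phi>] unfolding P_def by (simp add: degree_pderiv)
  moreover note osc[unfolded funpow_deriv_Suc]
  ultimately have "\<bar>deriv \<phi> t - poly (pderiv P) t\<bar> \<le> e / fact k * (Max X - Min X) ^ k"
    using interpolation_error[OF differentiable_upto_deriv[OF \<phi>] Z(1-3)] t by blast
  also have "\<dots> \<le> e * (Max X - Min X) ^ k"
    using osc[OF t t] t by (intro mult_right_mono) (auto simp: divide_le_eq mult_le_cancel_left1)
  also have "Max X - Min X = diameter X"
    using diameter_finite_real[OF X(1)] X(2) by force
  finally show ?thesis unfolding P_def .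
qed

lemma uniformly_continuous_small_oscillation:
  fixes F :: "real \<Rightarrow> real"
  assumes "continuous_on UNIV F" "compact K" "0 < \<epsilon>"
  obtains \<delta> where "0 < \<delta>"
    "\<And>S \<xi> \<eta>. S \<subseteq> K \<Longrightarrow> finite S \<Longrightarrow> S \<noteq> {} \<Longrightarrow> diameter S < \<delta> \<Longrightarrow>
      \<xi> \<in> {Min S..Max S} \<Longrightarrow> \<eta> \<in> {Min S..Max S} \<Longrightarrow> \<bar>F \<xi> - F \<eta>\<bar> < \<epsilon>"
proof -
  obtain R where "\<forall>x\<in>K. norm x \<le> R" using compact_imp_bounded[OF assms(2)] bounded_iff by blast
  then have KR: "K \<subseteq> {-R..R}" by (auto simp: abs_le_iff)
  have "uniformly_continuous_on {-R..R} F"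
    using assms(1) by (intro compact_uniformly_continuous) (auto intro: continuous_on_subset)
  then obtain \<delta> where \<delta>: "0 < \<delta>"
      "\<And>\<xi> \<eta>. \<xi> \<in> {-R..R} \<Longrightarrow> \<eta> \<in> {-R..R} \<Longrightarrow> dist \<xi> \<eta> < \<delta> \<Longrightarrow> dist (F \<xi>) (F \<eta>) < \<epsilon>"
    unfolding uniformly_continuous_on_def using assms(3) by metis
  show ?thesis
  proof (rule that[OF \<delta>(1)])
    fix S \<xi> \<eta>
    assume S: "S \<subseteq> K" "finite S" "S \<noteq> {}" "diameter S < \<delta>"
      and \<xi>\<eta>: "\<xi> \<in> {Min S..Max S}" "\<eta> \<in> {Min S..Max S}"
    have "{Min S..Max S} \<subseteq> {-R..R}"
      using S KR by (intro Min_Max_subset_atLeastAtMost) auto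
    moreover have "dist \<xi> \<eta> < \<delta>"
      using \<xi>\<eta> S(4) diameter_finite_real[OF S(2,3)] by (auto simp: dist_real_def)
    ultimately show "\<bar>F \<xi> - F \<eta>\<bar> < \<epsilon>"
      using \<delta>(2) \<xi>\<eta> by (auto simp: dist_real_def)
  qed
qed

lemma Cm_divdiff_unif_conv:
  assumes "Cm m \<phi>" "compact K"
  shows "divdiff_unif_conv m \<phi> K"
  unfolding divdiff_unif_conv_def
proof (intro allI impI)
  fix \<epsilon> :: real
  assume "0 < \<epsilon>"
  obtain \<delta> where \<delta>: "0 < \<delta>"
    "\<And>S \<xi> \<eta>. S \<subseteq> K \<Longrightarrow> finite S \<Longrightarrow> S \<noteq> {} \<Longrightarrow> diameter S < \<delta> \<Longrightarrow>
      \<xi> \<in> {Min S..Max S} \<Longrightarrow> \<eta> \<in> {Min S..Max S} \<Longrightarrow> \<bar>(deriv ^^ m) \<phi> \<xi> - (deriv ^^ m) \<phi> \<eta>\<bar> < \<epsilon>"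
    using uniformly_continuous_small_oscillation[OF Cm_continuous_deriv[OF assms(1) order_refl]
        assms(2) \<open>0 < \<epsilon>\<close>] by blast
  have "\<bar>divdiff \<phi> X - divdiff \<phi> Y\<bar> < \<epsilon>"
    if XY: "X \<subseteq> K" "Y \<subseteq> K" "finite X" "finite Y" "card X = Suc m" "card Y = Suc m"
      "diameter (X \<union> Y) < \<delta>" for X Y
  proof -
    obtain \<xi> \<eta> where
        \<xi>: "\<xi> \<in> {Min X..Max X}" "(deriv ^^ m) \<phi> \<xi> = fact m * divdiff \<phi> X" and
        \<eta>: "\<eta> \<in> {Min Y..Max Y}" "(deriv ^^ m) \<phi> \<eta> = fact m * divdiff \<phi> Y"
      using divdiff_mean_value[OF Cm_imp_differentiable_upto[OF assms(1)]] XY(3-6) by metis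
    have "X \<noteq> {}" "Y \<noteq> {}" using XY(5,6) by auto
    then have "{Min X..Max X} \<subseteq> {Min (X \<union> Y)..Max (X \<union> Y)}"
        "{Min Y..Max Y} \<subseteq> {Min (X \<union> Y)..Max (X \<union> Y)}"
      using XY(3,4) by (intro Min_Max_subset_atLeastAtMost; auto)+
    then have "\<xi> \<in> {Min (X \<union> Y)..Max (X \<union> Y)}" "\<eta> \<in> {Min (X \<union> Y)..Max (X \<union> Y)}"
      using \<xi>(1) \<eta>(1) by blast+
    then have "\<bar>(deriv ^^ m) \<phi> \<xi> - (deriv ^^ m) \<phi> \<eta>\<bar> < \<epsilon>"
      using \<delta>(2)[of "X \<union> Y"] XY \<open>X \<noteq> {}\<close> by blast
    then have "fact m * \<bar>divdiff \<phi> X - divdiff \<phi> Y\<bar> < \<epsilon>"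
      unfolding \<xi>(2) \<eta>(2) by (simp add: abs_mult flip: right_diff_distrib)
    then show ?thesis
      by (smt (verit) fact_ge_1 mult_le_cancel_right1 abs_ge_zero)
  qed
  then show "\<exists>\<delta>>0. \<forall>X Y. X \<subseteq> K \<and> Y \<subseteq> K \<and> finite X \<and> finite Y \<and> card X = m + 1 \<and>
      card Y = m + 1 \<and> diameter (X \<union> Y) < \<delta> \<longrightarrow> \<bar>divdiff \<phi> X - divdiff \<phi> Y\<bar> < \<epsilon>"
    using \<delta>(1) by auto
qed

lemma continuous_on_AE_eq:
  fixes F G :: "real \<Rightarrow> real"
  assumes "continuous_on UNIV F" "continuous_on UNIV G" "AE t in lborel. F t = G t"
  shows "F t = G t"
  using mem_closed_if_AE_lebesgue[OF closed_Collect_eq[OF assms(1,2)]] AE_completion[OF assms(3)]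
  by simp

lemma horizontal_deriv_eq:
  assumes "0 < m" "Cm m f" "Cm m g" "Cm m h" "horizontal f g h"
  shows "deriv h t = 2 * (deriv f t * g t - f t * deriv g t)"
proof -
  have "AE t in lborel. f differentiable (at t) \<and> g differentiable (at t) \<and>
      (h has_real_derivative 2 * (deriv f t * g t - f t * deriv g t)) (at t)"
    using assms(5) unfolding horizontal_def by blast
  then have "AE t in lborel. deriv h t = 2 * (deriv f t * g t - f t * deriv g t)"
    by (rule eventually_mono) (blast intro: DERIV_imp_deriv)
  moreover have "continuous_on UNIV (deriv h)"
    and "continuous_on UNIV (\<lambda>t. 2 * (deriv f t * g t - f t * deriv g t))"
    using Cm_continuous_deriv[of m f 0] Cm_continuous_deriv[of m f 1] Cm_continuous_deriv[of m g 0]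
      Cm_continuous_deriv[of m g 1] Cm_continuous_deriv[of m h 1] assms(1-4)
    by (auto intro!: continuous_intros)
  ultimately show ?thesis
    using continuous_on_AE_eq by blast
qed

lemma area_defect_has_integral:
  fixes f g h f' g' h' :: "real \<Rightarrow> real" and P Q :: "real poly"
  assumes "a \<le> b"
    and f: "\<And>t. (f has_real_derivative f' t) (at t)"
    and g: "\<And>t. (g has_real_derivative g' t) (at t)"
    and h: "\<And>t. (h has_real_derivative h' t) (at t)"
    and horizontal: "\<And>t. h' t = 2 * (f' t * g t - f t * g' t)"
    and ends: "f a = poly P a" "f b = poly P b" "g a = poly Q a" "g b = poly Q b"
  shows "((\<lambda>t. poly (pderiv P) t * (g t - poly Q t) - (f t - poly P t) * poly (pderiv Q) t
             - (f t - poly P t) * (g' t - poly (pderiv Q) t)) has_integral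
          (h b - h a - 2 * integral {a..b} (\<lambda>t. poly (pderiv P) t * poly Q t - poly (pderiv Q) t * poly P t)) / 4)
         {a..b}"
proof -
  \<comment> \<open>F is h minus the boundary terms of the integrations by parts; they vanish at a and b.\<close>
  define F where "F t = h t - 2 * (- poly P t * (g t - poly Q t) + (f t - poly P t) * poly Q t
      + (f t - poly P t) * (g t - poly Q t))" for t
  define F' where "F' t = h' t - 2 * ((- poly P t) * (g' t - poly (pderiv Q) t)
      + (- poly (pderiv P) t) * (g t - poly Q t)
      + ((f t - poly P t) * poly (pderiv Q) t + (f' t - poly (pderiv P) t) * poly Q t)
      + ((f t - poly P t) * (g' t - poly (pderiv Q) t) + (f' t - poly (pderiv P) t) * (g t - poly Q t)))"
    for t
  define J where "J = (\<lambda>t. poly (pderiv P) t * poly Q t - poly (pderiv Q) t * poly P t)"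
  have "(F has_real_derivative F' t) (at t)" for t
    unfolding F_def F'_def
    by (intro DERIV_diff DERIV_cmult DERIV_add DERIV_mult' DERIV_minus f g h poly_DERIV)
  then have "(F' has_integral (F b - F a)) {a..b}"
    using \<open>a \<le> b\<close> by (intro fundamental_theorem_of_calculus)
      (auto simp: has_real_derivative_iff_has_vector_derivative intro: has_vector_derivative_at_within)
  moreover have "F b - F a = h b - h a" unfolding F_def using ends by simp
  moreover have "(J has_integral integral {a..b} J) {a..b}"
    unfolding J_def by (intro integrable_integral integrable_continuous_interval continuous_intros)
  ultimately have "((\<lambda>t. (F' t - 2 * J t) / 4) has_integral (h b - h a - 2 * integral {a..b} J) / 4) {a..b}"
    by (intro has_integral_divide has_integral_diff has_integral_mult_right) auto
  moreover have "(\<lambda>t. (F' t - 2 * J t) / 4) = (\<lambda>t. poly (pderiv P) t * (g t - poly Q t)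
      - (f t - poly P t) * poly (pderiv Q) t - (f t - poly P t) * (g' t - poly (pderiv Q) t))"
    unfolding F'_def J_def horizontal by (rule ext) (simp add: field_simps)
  ultimately show ?thesis unfolding J_def by simp
qed

lemma area_defect_le:
  fixes f g h f' g' h' :: "real \<Rightarrow> real" and P Q :: "real poly"
  assumes "a \<le> b"
    and f: "\<And>t. (f has_real_derivative f' t) (at t)"
    and g: "\<And>t. (g has_real_derivative g' t) (at t)"
    and h: "\<And>t. (h has_real_derivative h' t) (at t)"
    and horizontal: "\<And>t. h' t = 2 * (f' t * g t - f t * g' t)"
    and ends: "f a = poly P a" "f b = poly P b" "g a = poly Q a" "g b = poly Q b"
    and u: "\<And>t. t \<in> {a..b} \<Longrightarrow> \<bar>f t - poly P t\<bar> \<le> c"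
    and v: "\<And>t. t \<in> {a..b} \<Longrightarrow> \<bar>g t - poly Q t\<bar> \<le> c"
    and v': "\<And>t. t \<in> {a..b} \<Longrightarrow> \<bar>g' t - poly (pderiv Q) t\<bar> \<le> c'"
  shows "\<bar>h b - h a - 2 * integral {a..b} (\<lambda>t. poly (pderiv P) t * poly Q t - poly (pderiv Q) t * poly P t)\<bar>
    \<le> 4 * (c * integral {a..b} (\<lambda>t. \<bar>poly (pderiv P) t\<bar> + \<bar>poly (pderiv Q) t\<bar>) + (b - a) * (c * c'))"
    (is "\<bar>?A\<bar> \<le> 4 * (c * ?I + _)")
proof -
  define R where "R t = poly (pderiv P) t * (g t - poly Q t) - (f t - poly P t) * poly (pderiv Q) t
      - (f t - poly P t) * (g' t - poly (pderiv Q) t)" for t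
  define B where "B = (\<lambda>t. c * (\<bar>poly (pderiv P) t\<bar> + \<bar>poly (pderiv Q) t\<bar>) + c * c')"
  have R_int: "(R has_integral ?A / 4) {a..b}"
    unfolding R_def by (rule area_defect_has_integral[OF assms(1-9)])
  have "((\<lambda>t. \<bar>poly (pderiv P) t\<bar> + \<bar>poly (pderiv Q) t\<bar>) has_integral ?I) {a..b}"
    by (intro integrable_integral integrable_continuous_interval continuous_intros)
  from has_integral_add[OF has_integral_mult_right[OF this, of c] has_integral_const_real[of "c * c'" a b]]
  have B_int: "(B has_integral c * ?I + (b - a) * (c * c')) {a..b}"
    using \<open>a \<le> b\<close> by (simp add: B_def)
  have "norm (R t) \<le> B t" if "t \<in> {a..b}" for t
  proof -
    have "\<bar>poly (pderiv P) t * (g t - poly Q t)\<bar> \<le> c * \<bar>poly (pderiv P) t\<bar>"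
      using v[OF that] unfolding abs_mult by (metis abs_ge_zero mult.commute mult_right_mono)
    moreover have "\<bar>(f t - poly P t) * poly (pderiv Q) t\<bar> \<le> c * \<bar>poly (pderiv Q) t\<bar>"
      using u[OF that] by (simp add: abs_mult mult_right_mono)
    moreover have "\<bar>(f t - poly P t) * (g' t - poly (pderiv Q) t)\<bar> \<le> c * c'"
      using u[OF that] v'[OF that] unfolding abs_mult by (intro mult_mono) auto
    ultimately show ?thesis unfolding R_def B_def real_norm_def by (simp add: distrib_left)
  qed
  then have "norm (integral {a..b} R) \<le> integral {a..b} B"
    using R_int B_int by (intro integral_norm_bound_integral) auto
  then show ?thesis
    using integral_unique[OF R_int] integral_unique[OF B_int] by simp
qed

lemma area_defect_ratio_bound:
  assumes m: "0 < m" and Cm: "Cm m f" "Cm m g" "Cm m h"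
    and horizontal: "\<And>t. deriv h t = 2 * (deriv f t * g t - f t * deriv g t)"
    and X: "finite X" "card X = Suc m" "a \<in> X" "b \<in> X" "a < b"
    and "e \<le> 1"
    and osc_f: "\<And>\<xi> \<eta>. \<xi> \<in> {Min X..Max X} \<Longrightarrow> \<eta> \<in> {Min X..Max X} \<Longrightarrow>
      \<bar>(deriv ^^ m) f \<xi> - (deriv ^^ m) f \<eta>\<bar> \<le> e"
    and osc_g: "\<And>\<xi> \<eta>. \<xi> \<in> {Min X..Max X} \<Longrightarrow> \<eta> \<in> {Min X..Max X} \<Longrightarrow>
      \<bar>(deriv ^^ m) g \<xi> - (deriv ^^ m) g \<eta>\<bar> \<le> e"
  shows "\<bar>AVA X f g h a b / AVV m X f g a b\<bar> \<le> 4 * e"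
proof -
  obtain k where k: "m = Suc k" using m by (cases m) auto
  define D where "D = diameter X"
  define P where "P = interp_poly X f"
  define Q where "Q = interp_poly X g"
  define I where "I = integral {a..b} (\<lambda>t. \<bar>poly (pderiv P) t\<bar> + \<bar>poly (pderiv Q) t\<bar>)"
  have "X \<noteq> {}" using X(3) by auto
  then have ab: "{a..b} \<subseteq> {Min X..Max X}" and "b - a \<le> D"
    using X diameter_finite_real[OF X(1)] by (auto simp: D_def intro: diff_mono)
  have "0 \<le> e" using osc_f ab X(5) by fastforce
  have "differentiable_upto (Suc k) f" "differentiable_upto (Suc k) g" "differentiable_upto (Suc k) h"
    using Cm[THEN Cm_imp_differentiable_upto] unfolding k .
  note diff = this this[THEN differentiable_upto_DERIV]
  have "\<bar>AVA X f g h a b\<bar> \<le> 4 * (e * D ^ m * I + (b - a) * (e * D ^ m * (e * D ^ k)))"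
    unfolding AVA_def I_def P_def Q_def
  proof (rule area_defect_le[OF _ diff(4-6) horizontal])
    fix t assume "t \<in> {a..b}"
    then have t: "t \<in> {Min X..Max X}" using ab by blast
    show "\<bar>f t - poly (interp_poly X f) t\<bar> \<le> e * D ^ m"
      unfolding D_def by (intro interp_poly_error Cm_imp_differentiable_upto Cm(1) X(1,2) t osc_f)
    show "\<bar>g t - poly (interp_poly X g) t\<bar> \<le> e * D ^ m"
      unfolding D_def by (intro interp_poly_error Cm_imp_differentiable_upto Cm(2) X(1,2) t osc_g)
    show "\<bar>deriv g t - poly (pderiv (interp_poly X g)) t\<bar> \<le> e * D ^ k"
      unfolding D_def by (intro deriv_interp_poly_error diff(2) X(1) X(2)[unfolded k] t osc_g[unfolded k])
  qed (use X poly_interp_poly[OF X(1,2)] in auto)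
  also have "(b - a) * (e * D ^ m * (e * D ^ k)) \<le> e * D ^ (2 * m)"
  proof -
    have "(b - a) * (e * D ^ m * (e * D ^ k)) = e * e * ((b - a) * D ^ (m + k))"
      by (simp add: power_add algebra_simps)
    also have "\<dots> \<le> e * 1 * (D * D ^ (m + k))"
      using \<open>0 \<le> e\<close> \<open>e \<le> 1\<close> \<open>b - a \<le> D\<close> X(5)
      by (intro mult_mono mult_right_mono) auto
    finally show ?thesis by (simp add: k mult_2)
  qed
  also have "e * D ^ m * I + e * D ^ (2 * m) = e * (D ^ (2 * m) + D ^ m * I)"
    by (simp add: algebra_simps)
  moreover have "AVV m X f g a b = D ^ (2 * m) + D ^ m * I"
    unfolding AVV_def D_def I_def P_def Q_def ..
  moreover have "0 \<le> I"
    unfolding I_def by (intro integral_nonneg integrable_continuous_interval continuous_intros) auto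
  then have "0 < D ^ (2 * m) + D ^ m * I"
    using \<open>b - a \<le> D\<close> X(5) by (intro add_pos_nonneg) auto
  ultimately show ?thesis
    by (simp add: abs_div pos_divide_le_eq)
qed

lemma Cm_discrete_AV:
  assumes "0 < m" "Cm m f" "Cm m g" "Cm m h"
    and horizontal: "\<And>t. deriv h t = 2 * (deriv f t * g t - f t * deriv g t)"
    and "compact K"
  shows "discrete_AV m f g h K"
  unfolding discrete_AV_def
proof (intro allI impI)
  fix \<epsilon> :: real
  assume "0 < \<epsilon>"
  define e where "e = min (\<epsilon> / 8) 1"
  have "0 < e" using \<open>0 < \<epsilon>\<close> by (simp add: e_def)
  obtain \<delta>f \<delta>g where \<delta>: "0 < \<delta>f" "0 < \<delta>g" and
    osc_f: "\<And>S \<xi> \<eta>. S \<subseteq> K \<Longrightarrow> finite S \<Longrightarrow> S \<noteq> {} \<Longrightarrow> diameter S < \<delta>f \<Longrightarrow>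
      \<xi> \<in> {Min S..Max S} \<Longrightarrow> \<eta> \<in> {Min S..Max S} \<Longrightarrow> \<bar>(deriv ^^ m) f \<xi> - (deriv ^^ m) f \<eta>\<bar> < e" and
    osc_g: "\<And>S \<xi> \<eta>. S \<subseteq> K \<Longrightarrow> finite S \<Longrightarrow> S \<noteq> {} \<Longrightarrow> diameter S < \<delta>g \<Longrightarrow>
      \<xi> \<in> {Min S..Max S} \<Longrightarrow> \<eta> \<in> {Min S..Max S} \<Longrightarrow> \<bar>(deriv ^^ m) g \<xi> - (deriv ^^ m) g \<eta>\<bar> < e"
    using uniformly_continuous_small_oscillation[OF Cm_continuous_deriv[OF _ order_refl] \<open>compact K\<close> \<open>0 < e\<close>]
      assms(2,3) by metis
  have "\<bar>AVA X f g h a b / AVV m X f g a b\<bar> < \<epsilon>"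
    if X: "X \<subseteq> K" "finite X" "card X = Suc m" "diameter X < min \<delta>f \<delta>g" "a \<in> X" "b \<in> X" "a < b"
    for X a b
  proof -
    have "X \<noteq> {}" using X(5) by auto
    then have "\<bar>AVA X f g h a b / AVV m X f g a b\<bar> \<le> 4 * e"
      using X osc_f[of X] osc_g[of X]
      by (intro area_defect_ratio_bound assms(1-4) horizontal) (auto simp: e_def less_imp_le)
    also have "\<dots> < \<epsilon>" using \<open>0 < \<epsilon>\<close> by (simp add: e_def)
    finally show ?thesis .
  qed
  then show "\<exists>\<delta>>0. \<forall>X a b. X \<subseteq> K \<and> finite X \<and> card X = m + 1 \<and> diameter X < \<delta>
      \<and> a \<in> X \<and> b \<in> X \<and> a < b \<longrightarrow> \<bar>AVA X f g h a b / AVV m X f g a b\<bar> < \<epsilon>"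
    using \<delta> by (intro exI[of _ "min \<delta>f \<delta>g"]) auto
qed

theorem proposition5p1:
  fixes f g h :: "real \<Rightarrow> real" and m :: nat and K :: "real set"
  assumes "m > 0"
    and "Cm m f" and "Cm m g" and "Cm m h"
    and "horizontal f g h"
    and "compact K"
  shows "divdiff_unif_conv m f K \<and> divdiff_unif_conv m g K \<and> divdiff_unif_conv m h K
         \<and> discrete_AV m f g h K"
  using Cm_divdiff_unif_conv[OF assms(2,6)] Cm_divdiff_unif_conv[OF assms(3,6)]
    Cm_divdiff_unif_conv[OF assms(4,6)]
    Cm_discrete_AV[OF assms(1-4) horizontal_deriv_eq[OF assms(1-5)] assms(6)]
  by blast

end
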